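(* Let $W\colon \mathrm{GL}^+(3)\to\mathbb{R}$ be a differentiable stored energy density, where $\mathrm{GL}^+(3)=\{X\in\mathbb{R}^{3\times 3}: \det X>0\}$, and let $S_1(F)=DW(F)$ denote its first Piola–Kirchhoff stress tensor. Assume $W$ is strictly rank-one convex in the monotonicity sense: for every $F\in\mathrm{GL}^+(3)$ and all $\xi,\eta\in\mathbb{R}^3$ with $\xi\otimes\eta\neq 0$ and $F+\xi\otimes\eta\in\mathrm{GL}^+(3)$, $$\langle S_1(F+\xi\otimes\eta)-S_1(F),\,\xi\otimes\eta\rangle_{\mathbb{R}^{3\times3}}>0.$$ Define the Cauchy stress $\sigma\colon\mathrm{GL}^+(3)\to\mathbb{R}^{3\times3}$ by $\sigma(F)=S_1(F)\,(\mathrm{Cof}\,F)^{-1}$. Then $\sigma$ is rank-one injective at every $F\in\mathrm{GL}^+(3)$: if $F\in\mathrm{GL}^+(3)$, $\xi,\eta\in\mathbb{R}^3$ with $F+\xi\otimes\eta\in\mathrm{GL}^+(3)$ and $\sigma(F+\xi\otimes\eta)=\sigma(F)$, then $\xi\otimes\eta=0$.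
   Context: $\langle X,Y\rangle_{\mathbb{R}^{3\times3}}=\mathrm{tr}(X^TY)$ is the Frobenius inner product; $\xi\otimes\eta$ is the dyadic product, the matrix with entries $\xi_i\eta_j$; $\mathrm{Cof}\,F=(\det F)\,F^{-T}$ is the cofactor matrix. A stress tensor $S$ is called rank-one injective at $F$ if $S(F+\xi\otimes\eta)=S(F)$ holds only for $\xi\otimes\eta=0$. *)

theory Defs
  imports "HOL-Analysis.Analysis"
begin

text \<open>3x3 real matrices are represented as real^3^3; the inner product on this
type is the Frobenius inner product tr(X^T Y).\<close>

definition GLp3 :: "(real^3^3) set" where
  "GLp3 = {X. det X > 0}"

definition dyad :: "real^3 \<Rightarrow> real^3 \<Rightarrow> real^3^3" where
  "dyad \<xi> \<eta> = (\<chi> i j. \<xi> $ i * \<eta> $ j)"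

definition Cof :: "real^3^3 \<Rightarrow> real^3^3" where
  "Cof F = det F *\<^sub>R matrix_inv (transpose F)"

definition cauchy_stress :: "(real^3^3 \<Rightarrow> real^3^3) \<Rightarrow> real^3^3 \<Rightarrow> real^3^3" where
  "cauchy_stress S1 F = S1 F ** matrix_inv (Cof F)"

end

theory Submission
  imports Defs
begin

text \<open>The Cauchy stress determines the Piola stress via S1 X = \<sigma>(X) Cof X. The cofactor
  matrix satisfies Cof(F + \<xi>\<otimes>\<eta>) \<eta> = Cof F \<eta> (a consequence of the matrix determinant lemma
  det(F + \<xi>\<otimes>\<eta>) = det F + \<langle>\<xi>, Cof F \<eta>\<rangle>), so if \<sigma> takes the same value \<sigma> at F and at
  F + \<xi>\<otimes>\<eta>, then \<langle>S1(F + \<xi>\<otimes>\<eta>) - S1 F, \<xi>\<otimes>\<eta>\<rangle> = \<langle>\<xi>, \<sigma> (Cof(F + \<xi>\<otimes>\<eta>) - Cof F) \<eta>\<rangle> = 0,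
  which contradicts strict rank-one monotonicity unless \<xi>\<otimes>\<eta> = 0.\<close>

lemma matrix_inv_right:
  fixes A :: "'a::semiring_1^'n^'m"
  assumes "invertible A"
  shows "A ** matrix_inv A = mat 1"
  using someI_ex[of "\<lambda>A'. A ** A' = mat 1 \<and> A' ** A = mat 1"] assms
  by (simp add: invertible_def matrix_inv_def)

lemma matrix_inv_left:
  fixes A :: "'a::semiring_1^'n^'m"
  assumes "invertible A"
  shows "matrix_inv A ** A = mat 1"
  using someI_ex[of "\<lambda>A'. A ** A' = mat 1 \<and> A' ** A = mat 1"] assms
  by (simp add: invertible_def matrix_inv_def)

lemma invertible_matrix_inv:
  fixes A :: "'a::semiring_1^'n^'m"
  assumes "invertible A"
  shows "invertible (matrix_inv A)"
  using matrix_inv_left[OF assms] matrix_inv_right[OF assms] unfolding invertible_def by blast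

lemma matrix_diff_ldistrib:
  fixes A :: "'a::ring_1^'n^'m"
  shows "A ** (B - C) = A ** B - A ** C"
  by (simp add: matrix_matrix_mult_def vec_eq_iff sum_subtractf right_diff_distrib)

lemma invertible_Cof:
  assumes "det X \<noteq> 0"
  shows "invertible (Cof X)"
  using assms unfolding Cof_def
  by (intro scalar_invertible invertible_matrix_inv) (simp_all add: invertible_det_nz)

lemma transpose_mult_Cof:
  assumes "det X \<noteq> 0"
  shows "transpose X ** Cof X = det X *\<^sub>R mat 1"
proof -
  have "transpose X ** Cof X = det X *\<^sub>R (transpose X ** matrix_inv (transpose X))"
    unfolding Cof_def by (simp add: matrix_matrix_mult_def sum_distrib_left mult_ac vec_eq_iff)
  then show ?thesis
    using assms by (simp add: matrix_inv_right invertible_det_nz)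
qed

lemma transpose_mult_Cof_vector:
  assumes "det X \<noteq> 0"
  shows "transpose X *v (Cof X *v v) = det X *\<^sub>R v"
  using transpose_mult_Cof[OF assms]
  by (simp add: matrix_vector_mul_assoc scaleR_matrix_vector_assoc[symmetric])

lemma inner_dyad: "A \<bullet> dyad a b = a \<bullet> (A *v b)"
  by (simp add: inner_vec_def dyad_def matrix_vector_mult_def sum_distrib_left mult_ac)

lemma matrix_mult_dyad: "A ** dyad u v = dyad (A *v u) v"
  by (simp add: dyad_def matrix_matrix_mult_def matrix_vector_mult_def vec_eq_iff
      sum_distrib_left mult_ac)

lemma transpose_dyad_mult: "transpose (dyad a b) *v v = (a \<bullet> v) *\<^sub>R b"
  by (simp add: dyad_def transpose_def matrix_vector_mult_def vec_eq_iff inner_vec_def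
      sum_distrib_left mult_ac)

lemma det_mat_1_add_dyad: "det (mat 1 + dyad u v) = 1 + u \<bullet> v"
  by (simp add: det_3 mat_def dyad_def inner_vec_def sum_3) algebra

lemma det_add_dyad:
  assumes "det F \<noteq> 0"
  shows "det (F + dyad \<xi> \<eta>) = det F + \<xi> \<bullet> (Cof F *v \<eta>)"
proof -
  have invF: "invertible F"
    using assms by (simp add: invertible_det_nz)
  define u where "u = matrix_inv F *v \<xi>"
  have \<xi>: "\<xi> = F *v u"
    unfolding u_def by (simp add: matrix_vector_mul_assoc matrix_inv_right[OF invF])
  have "det (F + dyad \<xi> \<eta>) = det (F ** (mat 1 + dyad u \<eta>))"
    by (simp add: \<xi> matrix_add_ldistrib matrix_mult_dyad)
  also have "\<dots> = det F + u \<bullet> (det F *\<^sub>R \<eta>)"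
    by (simp add: det_mul det_mat_1_add_dyad algebra_simps)
  also have "\<dots> = det F + u \<bullet> (transpose F *v (Cof F *v \<eta>))"
    using transpose_mult_Cof_vector[OF assms] by simp
  also have "\<dots> = det F + \<xi> \<bullet> (Cof F *v \<eta>)"
    by (metis \<xi> dot_lmul_matrix vector_transpose_matrix)
  finally show ?thesis .
qed

lemma Cof_add_dyad_mult:
  assumes F: "det F \<noteq> 0" and G: "det (F + dyad \<xi> \<eta>) \<noteq> 0"
  shows "Cof (F + dyad \<xi> \<eta>) *v \<eta> = Cof F *v \<eta>"
proof -
  let ?G = "F + dyad \<xi> \<eta>"
  have "transpose ?G *v (Cof F *v \<eta>)
      = transpose F *v (Cof F *v \<eta>) + transpose (dyad \<xi> \<eta>) *v (Cof F *v \<eta>)"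
    by (simp add: transpose_def matrix_vector_mult_def vec_eq_iff sum.distrib algebra_simps)
  also have "\<dots> = det F *\<^sub>R \<eta> + (\<xi> \<bullet> (Cof F *v \<eta>)) *\<^sub>R \<eta>"
    by (simp only: transpose_mult_Cof_vector[OF F] transpose_dyad_mult)
  also have "\<dots> = det ?G *\<^sub>R \<eta>"
    by (simp add: det_add_dyad[OF F] scaleR_left_distrib)
  also have "\<dots> = transpose ?G *v (Cof ?G *v \<eta>)"
    using transpose_mult_Cof_vector[OF G] by simp
  finally show ?thesis
    using inj_matrix_vector_mult[of "transpose ?G"] G by (simp add: invertible_det_nz injD)
qed

lemma cauchy_stress_mult_Cof:
  assumes "det X \<noteq> 0"
  shows "cauchy_stress S1 X ** Cof X = S1 X"
  using matrix_inv_left[OF invertible_Cof[OF assms]]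
  by (simp add: cauchy_stress_def flip: matrix_mul_assoc)

lemma cauchy_stress_eq_imp_inner_dyad_eq_0:
  assumes F: "det F \<noteq> 0" and G: "det (F + dyad \<xi> \<eta>) \<noteq> 0"
    and eq: "cauchy_stress S1 (F + dyad \<xi> \<eta>) = cauchy_stress S1 F"
  shows "(S1 (F + dyad \<xi> \<eta>) - S1 F) \<bullet> dyad \<xi> \<eta> = 0"
proof -
  let ?G = "F + dyad \<xi> \<eta>" and ?\<sigma> = "cauchy_stress S1 F"
  have "S1 ?G - S1 F = ?\<sigma> ** (Cof ?G - Cof F)"
    using cauchy_stress_mult_Cof[OF F, of S1] cauchy_stress_mult_Cof[OF G, of S1] eq
    by (simp add: matrix_diff_ldistrib)
  then have "(S1 ?G - S1 F) \<bullet> dyad \<xi> \<eta> = \<xi> \<bullet> (?\<sigma> *v (Cof ?G *v \<eta> - Cof F *v \<eta>))"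
    by (simp add: inner_dyad matrix_vector_mul_assoc[symmetric] matrix_vector_mult_diff_rdistrib)
  then show ?thesis
    using Cof_add_dyad_mult[OF F G] by simp
qed

theorem mainTheorem1:
  fixes W :: "real^3^3 \<Rightarrow> real" and S1 :: "real^3^3 \<Rightarrow> real^3^3"
    and F :: "real^3^3" and \<xi> \<eta> :: "real^3"
  assumes deriv: "\<And>X. X \<in> GLp3 \<Longrightarrow> (W has_derivative (\<lambda>H. S1 X \<bullet> H)) (at X)"
    and src: "\<And>X a b. X \<in> GLp3 \<Longrightarrow> dyad a b \<noteq> 0 \<Longrightarrow> X + dyad a b \<in> GLp3 \<Longrightarrow>
        (S1 (X + dyad a b) - S1 X) \<bullet> dyad a b > 0"
    and F: "F \<in> GLp3"
    and F1: "F + dyad \<xi> \<eta> \<in> GLp3"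
    and eq: "cauchy_stress S1 (F + dyad \<xi> \<eta>) = cauchy_stress S1 F"
  shows "dyad \<xi> \<eta> = 0"
proof (rule ccontr)
  assume "dyad \<xi> \<eta> \<noteq> 0"
  then have "(S1 (F + dyad \<xi> \<eta>) - S1 F) \<bullet> dyad \<xi> \<eta> > 0"
    using src F F1 by blast
  moreover have "det F \<noteq> 0" "det (F + dyad \<xi> \<eta>) \<noteq> 0"
    using F F1 by (auto simp: GLp3_def)
  ultimately show False
    using cauchy_stress_eq_imp_inner_dyad_eq_0[OF _ _ eq] by simp
qed

end
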